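(* Let $f$ be a Hamiltonian stationary torus. The monodromy $H^\mu$ of the flat connection $d^\mu$ is a complex multiple of the identity if and only if $\mu\in S^1$ with $\beta_0\overline{\sqrt\mu}\in\Gamma^*$.
   Context: Identify $\mathbb R^4$ with $\mathbb H$ and $\mathbb C$ with $\mathrm{span}_{\mathbb R}\{1,i\}$; $\langle\cdot,\cdot\rangle$ is the Euclidean inner product on $\mathbb C\cong\mathbb R^2$. $\Gamma\subset\mathbb C$ a lattice, $\Gamma^*$ its dual lattice. A Hamiltonian stationary torus is a $\Gamma$-periodic conformal immersion $f:\mathbb C\to\mathbb H$ with $df=e^{j\beta/2}dz\,g$, $dz=dx+i\,dy$, $g$ nowhere zero, $\beta(z)=2\pi\langle\beta_0,z\rangle$, $0\ne\beta_0\in\Gamma^*$; convention $*dz=i\,dz$; left normal $N=e^{j\beta}i$. With $(dN)'=\frac12(dN-N*dN)$ define $H$ by $(dN)'=-df\,H$. Regard $\mathbb H$ as $\mathbb C^2$ via right multiplication by $i$. For $\mu\in\mathbb C_*$, $d^\mu$ is the flat complex connection on the trivial $\mathbb C^2$-bundle given by $d^\mu\alpha=d\alpha+\frac12df\,H\,(N\alpha(a-1)+\alpha b)$, $a=\frac{\mu+\mu^{-1}}2$, $b=\frac{\mu^{-1}-\mu}2i$ (acting from the right). $H^\mu$ denotes its monodromy (holonomy along the lattice translations $\gamma\in\Gamma$) acting on the 2-dimensional space of parallel sections; the condition is independent of the choice of square root $\sqrt\mu$. *)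

theory Defs
  imports "HOL-Analysis.Analysis"
begin

text \<open>A quaternion is represented as a pair (a,b) of complex numbers standing for
  a + b j, where the complex numbers are span{1,i}. Then k = i j = (0, i), and
  j c = cnj c j for complex c, which gives the multiplication below. The norm of the
  product type is the Euclidean norm on R^4 = H.\<close>

type_synonym quat = "complex \<times> complex"

definition qmult :: "quat \<Rightarrow> quat \<Rightarrow> quat" (infixl "\<odot>" 70) where
  "p \<odot> q = (fst p * fst q - snd p * cnj (snd q), fst p * snd q + snd p * cnj (fst q))"

definition qc :: "complex \<Rightarrow> quat" where
  "qc z = (z, 0)"

definition qexpj :: "real \<Rightarrow> quat" where
  "qexpj t = (complex_of_real (cos t), complex_of_real (sin t))"

definition ip :: "complex \<Rightarrow> complex \<Rightarrow> real" where
  "ip a b = Re (a * cnj b)"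

definition lattice_gen :: "complex \<Rightarrow> complex \<Rightarrow> complex set" where
  "lattice_gen w1 w2 = {of_int m * w1 + of_int n * w2 | m n. True}"

definition dual_lattice :: "complex set \<Rightarrow> complex set" where
  "dual_lattice L = {w. \<forall>\<gamma>\<in>L. ip w \<gamma> \<in> \<int>}"

coinductive smooth_fun :: "('a::real_normed_vector \<Rightarrow> 'b::real_normed_vector) \<Rightarrow> bool" where
  "(\<forall>z. f differentiable (at z)) \<Longrightarrow>
   (\<forall>v. smooth_fun (\<lambda>z. frechet_derivative f (at z) v)) \<Longrightarrow> smooth_fun f"

definition hs_beta :: "complex \<Rightarrow> complex \<Rightarrow> real" where
  "hs_beta \<beta>0 z = 2 * pi * ip \<beta>0 z"

text \<open>df_z(v) = e^(j beta(z)/2) dz(v) g(z), with dz(v) = v.\<close>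
definition hs_df :: "complex \<Rightarrow> (complex \<Rightarrow> quat) \<Rightarrow> complex \<Rightarrow> complex \<Rightarrow> quat" where
  "hs_df \<beta>0 g z v = qexpj (hs_beta \<beta>0 z / 2) \<odot> qc v \<odot> g z"

definition hs_N :: "complex \<Rightarrow> complex \<Rightarrow> quat" where
  "hs_N \<beta>0 z = qexpj (hs_beta \<beta>0 z) \<odot> qc \<i>"

text \<open>(omega)' = 1/2 (omega - N * omega), where (* omega)(v) = omega(i v)
  (so that * dz = i dz).\<close>
definition dprime :: "quat \<Rightarrow> (complex \<Rightarrow> quat) \<Rightarrow> complex \<Rightarrow> quat" where
  "dprime N \<omega> v = (1/2) *\<^sub>R (\<omega> v - N \<odot> \<omega> (\<i> * v))"

definition mu_a :: "complex \<Rightarrow> complex" where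
  "mu_a \<mu> = (\<mu> + inverse \<mu>) / 2"

definition mu_b :: "complex \<Rightarrow> complex" where
  "mu_b \<mu> = (inverse \<mu> - \<mu>) / 2 * \<i>"

definition parallel_section ::
  "complex \<Rightarrow> (complex \<Rightarrow> quat) \<Rightarrow> (complex \<Rightarrow> quat) \<Rightarrow> complex \<Rightarrow> (complex \<Rightarrow> quat) \<Rightarrow> bool" where
  "parallel_section \<beta>0 g H \<mu> \<alpha> \<longleftrightarrow>
     (\<forall>z. \<exists>D. (\<alpha> has_derivative D) (at z) \<and>
        (\<forall>v. D v + (1/2) *\<^sub>R (hs_df \<beta>0 g z v \<odot> H z \<odot>
              (hs_N \<beta>0 z \<odot> \<alpha> z \<odot> qc (mu_a \<mu> - 1) + \<alpha> z \<odot> qc (mu_b \<mu>))) = 0))"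

text \<open>The monodromy H^mu is a complex multiple of the identity: for every lattice
  translation gamma there is a complex number c with alpha(z + gamma) = alpha(z) c for
  every parallel section alpha (complex structure = right multiplication by i).\<close>
definition monodromy_scalar ::
  "complex set \<Rightarrow> complex \<Rightarrow> (complex \<Rightarrow> quat) \<Rightarrow> (complex \<Rightarrow> quat) \<Rightarrow> complex \<Rightarrow> bool" where
  "monodromy_scalar \<Gamma> \<beta>0 g H \<mu> \<longleftrightarrow>
     (\<forall>\<gamma>\<in>\<Gamma>. \<exists>c::complex. \<forall>\<alpha>. parallel_section \<beta>0 g H \<mu> \<alpha> \<longrightarrow>
        (\<forall>z. \<alpha> (z + \<gamma>) = \<alpha> z \<odot> qc c))"

end

theory Submission
  imports Defs
begin

text \<open>
  Write a section as \<open>\<alpha> = (x, y)\<close>, i.e. \<open>\<alpha> = x + y j\<close>, and use the coordinates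
  \<open>(u, w) = (x, cnj y)\<close>; they are complex linear for the complex structure given by right
  multiplication by \<open>i\<close>. Since \<open>N = e\<^sup>j\<^sup>\<beta> i\<close> is explicit, \<open>(dN)'\<close> and hence \<open>df H\<close> are explicit,
  and \<open>d\<^sup>\<mu>\<alpha> = 0\<close> becomes a linear system \<open>d(u, w) = \<Omega>(u, w)\<close> with trace-free \<open>\<Omega>\<close>.
  For \<open>s\<^sup>2 = \<mu>\<close> it has the two solutions \<open>e\<^sub>\<plusminus>\<close>: the vector \<open>(s, \<plusminus>i)\<close> rotated by the angle \<open>\<beta>/2\<close> and
  multiplied by \<open>exp (\<plusminus>i \<phi>)\<close>, where \<open>\<phi>(z) = \<pi>/2 (s cnj \<beta>\<^sub>0 z + \<beta>\<^sub>0/s cnj z)\<close>. Their Wronskian is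
  \<open>-2is \<noteq> 0\<close>, and the Wronskian of any two solutions is constant, so \<open>e\<^sub>\<plusminus>\<close> span the parallel
  sections. Translation by \<open>\<gamma> \<in> \<Gamma>\<close> multiplies \<open>e\<^sub>\<plusminus>\<close> by \<open>(-1)\<^bsup>\<langle>\<beta>\<^sub>0,\<gamma>\<rangle>\<^esup> exp (\<plusminus>i \<phi>(\<gamma>))\<close>, so
  the monodromy is scalar iff \<open>\<phi>(\<Gamma>) \<subseteq> \<pi>\<int>\<close>. As \<open>\<Gamma>\<close> spans \<open>\<complex>\<close> over \<open>\<real>\<close>, \<open>\<phi>\<close> can only be real
  on \<open>\<Gamma>\<close> if \<open>|s| = 1\<close>, and then \<open>\<phi>(\<gamma>) = \<pi> \<langle>\<beta>\<^sub>0 cnj s, \<gamma>\<rangle>\<close>.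
\<close>

lemma qmult_uminus_left: "(- p) \<odot> q = - (p \<odot> q)"
  by (cases p; cases q) (simp add: qmult_def)

lemma has_derivative_exp_complex:
  fixes g :: "'a::real_normed_vector \<Rightarrow> complex"
  assumes "(g has_derivative g') (at x within S)" and "D = (\<lambda>v. exp (g x) * g' v)"
  shows "((\<lambda>x. exp (g x)) has_derivative D) (at x within S)"
  using has_derivative_compose[OF assms(1), of exp "\<lambda>h. exp (g x) * h"] DERIV_exp[of "g x"]
  by (simp add: assms(2) has_field_derivative_def)

lemma exp_i_eq_exp_minus_i_iff:
  fixes m :: complex
  shows "exp (\<i> * m) = exp (- (\<i> * m)) \<longleftrightarrow> (\<exists>n::int. m = of_int n * pi)"
  unfolding exp_eq
proof
  assume "\<exists>n::int. \<i> * m = - (\<i> * m) + of_int (2 * n) * pi * \<i>"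
  then obtain n :: int where "\<i> * m = - (\<i> * m) + of_int (2 * n) * pi * \<i>" by blast
  then have "2 * (\<i> * m) = 2 * (\<i> * (of_int n * pi))" by (simp add: algebra_simps)
  then show "\<exists>n::int. m = of_int n * pi" by auto
qed (auto simp: algebra_simps)

lemma exp_i_int_pi:
  assumes "sg = 1 \<or> sg = -1"
  shows "exp (\<i> * sg * (of_int n * pi)) = cos (pi * n)"
proof -
  have euler: "exp (\<i> * of_real x) = of_real (cos x) + \<i> * of_real (sin x)" for x :: real
    by (simp add: cis_conv_exp[symmetric] cis.ctr Complex_eq)
  from assms consider "sg = 1" | "sg = -1" by blast
  then show ?thesis
  proof cases
    case 1
    then show ?thesis using euler[of "pi * n"] by (simp add: mult.commute)
  next
    case 2
    then show ?thesis using euler[of "- (pi * n)"] by (simp add: mult.commute)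
  qed
qed

lemma cramer_zero:
  fixes p q u1 w1 u2 w2 :: "'a::field"
  assumes "p * w1 - q * u1 = 0" and "p * w2 - q * u2 = 0" and "u1 * w2 - w1 * u2 \<noteq> 0"
  shows "p = 0" and "q = 0"
proof -
  have "p * (u1 * w2 - w1 * u2) = u1 * (p * w2 - q * u2) - u2 * (p * w1 - q * u1)"
    and "q * (u1 * w2 - w1 * u2) = w1 * (p * w2 - q * u2) - w2 * (p * w1 - q * u1)"
    by (simp_all add: algebra_simps)
  then have "p * (u1 * w2 - w1 * u2) = 0" and "q * (u1 * w2 - w1 * u2) = 0"
    unfolding assms(1,2) by simp_all
  with assms(3) show "p = 0" and "q = 0" by simp_all
qed

lemma lattice_gen_generators: "w1 \<in> lattice_gen w1 w2" "w2 \<in> lattice_gen w1 w2"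
proof -
  have "w1 = of_int 1 * w1 + of_int 0 * w2" and "w2 = of_int 0 * w1 + of_int 1 * w2"
    by simp_all
  then show "w1 \<in> lattice_gen w1 w2" "w2 \<in> lattice_gen w1 w2"
    unfolding lattice_gen_def by blast+
qed

lemma Im_mult_cnj_eq_0_if_rotated_real:
  fixes C w1 w2 :: complex
  assumes "C \<noteq> 0" and "Im (C * cnj w1) = 0" and "Im (C * cnj w2) = 0"
  shows "Im (w1 * cnj w2) = 0"
proof -
  have "(cmod C)\<^sup>2 * Im (w1 * cnj w2) = Im (cnj (C * cnj w1) * (C * cnj w2))"
    unfolding cmod_power2 by (simp add: algebra_simps power2_eq_square)
  also have "\<dots> = 0"
    using assms(2,3) by simp
  finally show ?thesis
    using assms(1) by simp
qed

section \<open>The connection in complex coordinates\<close>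

text \<open>The system \<open>d(u, w) = \<Omega>(u, w)\<close> evaluated at a tangent vector \<open>v\<close>, where \<open>A\<close>, \<open>B\<close> are
  the coefficients \<open>a\<close>, \<open>b\<close> of \<open>d\<^sup>\<mu>\<close>, \<open>c = cos \<beta>\<close>, \<open>\<sigma> = sin \<beta>\<close>, \<open>db = d\<beta>(v)\<close> and \<open>ds = d\<beta>(i v)\<close>.\<close>

definition conn_u :: "complex \<Rightarrow> complex \<Rightarrow> complex \<Rightarrow> complex \<Rightarrow> complex \<Rightarrow> complex \<Rightarrow> complex \<Rightarrow> complex \<Rightarrow> complex" where
  "conn_u A B c \<sigma> db ds u w =
     (1/4) * (- \<i>*\<sigma>*db*(\<i>*(c*u + \<sigma>*w)*(A-1) + u*B) + (\<i>*c*db + ds)*(-\<i>*(c*w - \<sigma>*u)*(A-1) + w*B))"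

definition conn_w :: "complex \<Rightarrow> complex \<Rightarrow> complex \<Rightarrow> complex \<Rightarrow> complex \<Rightarrow> complex \<Rightarrow> complex \<Rightarrow> complex \<Rightarrow> complex" where
  "conn_w A B c \<sigma> db ds u w =
     (1/4) * (\<i>*\<sigma>*db*(-\<i>*(c*w - \<sigma>*u)*(A-1) + w*B) + (\<i>*c*db - ds)*(\<i>*(c*u + \<sigma>*w)*(A-1) + u*B))"

lemma conn_trace_free:
  "conn_u A B c \<sigma> db ds u w * w' + u * conn_w A B c \<sigma> db ds u' w'
     - conn_w A B c \<sigma> db ds u w * u' - w * conn_u A B c \<sigma> db ds u' w' = 0"
  unfolding conn_u_def conn_w_def by (simp add: algebra_simps)

lemma conn_rotated_eigenvector:
  fixes C S s E db ds sg c \<sigma> dm u w :: complex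
  assumes cs: "C\<^sup>2 + S\<^sup>2 = 1" and sg: "sg = 1 \<or> sg = -1" and s: "s \<noteq> 0"
    and c: "c = C\<^sup>2 - S\<^sup>2" and \<sigma>: "\<sigma> = 2 * S * C"
    and dm: "dm = (1/4) * (s * (db - \<i> * ds) + (db + \<i> * ds) / s)"
    and u: "u = (C * s - S * sg * \<i>) * E" and w: "w = (S * s + C * sg * \<i>) * E"
  shows "- w * (db/2) + u * (\<i> * sg * dm) = conn_u (mu_a (s\<^sup>2)) (mu_b (s\<^sup>2)) c \<sigma> db ds u w"
    and "u * (db/2) + w * (\<i> * sg * dm) = conn_w (mu_a (s\<^sup>2)) (mu_b (s\<^sup>2)) c \<sigma> db ds u w"
  unfolding c \<sigma> dm u w conn_u_def conn_w_def mu_a_def mu_b_def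
  by (rule disjE[OF sg]; simp add: s field_simps; use cs in algebra)+

lemma dprime_rotation:
  fixes c \<sigma> :: real and \<rho> :: "complex \<Rightarrow> real"
  assumes "c\<^sup>2 + \<sigma>\<^sup>2 = 1"
  shows "dprime (\<i> * c, - \<i> * \<sigma>) (\<lambda>v. (- \<i> * \<sigma> * \<rho> v, - \<i> * c * \<rho> v)) v
     = ((1/2) * (- \<i> * \<sigma> * \<rho> v), (1/2) * (- \<i> * c * \<rho> v - \<rho> (\<i> * v)))"
proof -
  have "(complex_of_real c)\<^sup>2 + (complex_of_real \<sigma>)\<^sup>2 = 1"
    by (metis assms of_real_1 of_real_add of_real_power)
  moreover have "\<sigma> * (\<sigma> * X) + c * (c * X) = (c\<^sup>2 + \<sigma>\<^sup>2) * X" for X :: complex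
    by (simp add: power2_eq_square algebra_simps)
  ultimately have "X = \<sigma> * (\<sigma> * X) + c * (c * X)" for X :: complex
    by simp
  from this[of "\<rho> (\<i> * v)"] show ?thesis
    unfolding dprime_def qmult_def by (simp add: scaleR_conv_of_real algebra_simps)
qed

lemma connection_term_coords:
  fixes db ds c \<sigma> :: real and x y A B :: complex
  shows "(1/2) *\<^sub>R (((1/2) * (- \<i> * \<sigma> * db), (1/2) * (- \<i> * c * db - ds))
      \<odot> ((\<i> * c, - \<i> * \<sigma>) \<odot> (x, y) \<odot> qc (A - 1) + (x, y) \<odot> qc B))
   = (conn_u A B c \<sigma> db ds x (cnj y), cnj (conn_w A B c \<sigma> db ds x (cnj y)))"
  unfolding qmult_def qc_def conn_u_def conn_w_def
  by (simp add: scaleR_conv_of_real algebra_simps)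

lemma hs_beta_add: "hs_beta b (z + \<gamma>) = hs_beta b z + hs_beta b \<gamma>"
  by (simp add: hs_beta_def ip_def algebra_simps)

lemma has_derivative_hs_beta: "(hs_beta b has_derivative hs_beta b) (at z)"
proof -
  have "hs_beta b = (\<lambda>z. 2 * pi * Re (b * cnj z))"
    by (auto simp: hs_beta_def ip_def)
  then show ?thesis
    by (auto intro!: derivative_eq_intros)
qed

lemma hs_N_eq: "hs_N b = (\<lambda>z. (\<i> * cos (hs_beta b z), - \<i> * sin (hs_beta b z)))"
  by (auto simp: hs_N_def qexpj_def qc_def qmult_def)

lemma has_derivative_hs_N:
  "(hs_N b has_derivative
     (\<lambda>v. (- \<i> * sin (hs_beta b z) * hs_beta b v, - \<i> * cos (hs_beta b z) * hs_beta b v))) (at z)"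
  unfolding hs_N_eq by (auto intro!: derivative_eq_intros has_derivative_hs_beta simp: algebra_simps)

definition hs_conn_u :: "complex \<Rightarrow> complex \<Rightarrow> complex \<Rightarrow> complex \<Rightarrow> complex \<Rightarrow> complex \<Rightarrow> complex" where
  "hs_conn_u \<mu> b z v u w = conn_u (mu_a \<mu>) (mu_b \<mu>) (cos (hs_beta b z)) (sin (hs_beta b z))
     (hs_beta b v) (hs_beta b (\<i> * v)) u w"

definition hs_conn_w :: "complex \<Rightarrow> complex \<Rightarrow> complex \<Rightarrow> complex \<Rightarrow> complex \<Rightarrow> complex \<Rightarrow> complex" where
  "hs_conn_w \<mu> b z v u w = conn_w (mu_a \<mu>) (mu_b \<mu>) (cos (hs_beta b z)) (sin (hs_beta b z))
     (hs_beta b v) (hs_beta b (\<i> * v)) u w"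

section \<open>Explicit solutions of the system\<close>

text \<open>\<open>hs_phase b s\<close> is the phase \<open>\<phi>\<close> for \<open>\<beta>\<^sub>0 = b\<close>, and \<open>(hs_sol_u, hs_sol_w)\<close> are the
  coordinates of \<open>e\<^sub>+\<close> for \<open>sg = 1\<close> and of \<open>e\<^sub>-\<close> for \<open>sg = -1\<close>.\<close>

definition hs_phase :: "complex \<Rightarrow> complex \<Rightarrow> complex \<Rightarrow> complex" where
  "hs_phase b s z = (pi/2) * (s * cnj b * z + (b / s) * cnj z)"

definition hs_sol_u :: "complex \<Rightarrow> complex \<Rightarrow> complex \<Rightarrow> complex \<Rightarrow> complex" where
  "hs_sol_u b s sg z = (of_real (cos (hs_beta b z / 2)) * s - of_real (sin (hs_beta b z / 2)) * sg * \<i>)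
     * exp (\<i> * sg * hs_phase b s z)"

definition hs_sol_w :: "complex \<Rightarrow> complex \<Rightarrow> complex \<Rightarrow> complex \<Rightarrow> complex" where
  "hs_sol_w b s sg z = (of_real (sin (hs_beta b z / 2)) * s + of_real (cos (hs_beta b z / 2)) * sg * \<i>)
     * exp (\<i> * sg * hs_phase b s z)"

lemma hs_phase_add: "hs_phase b s (z + \<gamma>) = hs_phase b s z + hs_phase b s \<gamma>"
  by (simp add: hs_phase_def algebra_simps)

lemma has_derivative_hs_phase: "(hs_phase b s has_derivative hs_phase b s) (at z)"
proof -
  have "hs_phase b s = (\<lambda>z. (pi/2 * s * cnj b) * z + (pi/2 * (b/s)) * cnj z)"
    by (auto simp: hs_phase_def algebra_simps)
  moreover have "((\<lambda>z. K1 * z + K2 * cnj z) has_derivative (\<lambda>z. K1 * z + K2 * cnj z)) (at z)"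
    for K1 K2 :: complex
    by (auto intro!: derivative_eq_intros)
  ultimately show ?thesis
    by metis
qed

lemma hs_phase_eq: "hs_phase b s v = (1/4) * (s * (hs_beta b v - \<i> * hs_beta b (\<i> * v))
    + (hs_beta b v + \<i> * hs_beta b (\<i> * v)) / s)"
proof -
  have "hs_beta b v + \<i> * hs_beta b (\<i> * v) = 2 * pi * (b * cnj v)"
    and "hs_beta b v - \<i> * hs_beta b (\<i> * v) = 2 * pi * (cnj b * v)"
    by (simp_all add: complex_eq_iff hs_beta_def ip_def algebra_simps)
  then show ?thesis
    by (simp add: hs_phase_def field_simps)
qed

lemma has_derivative_hs_sol:
  assumes s: "s \<noteq> 0" and sg: "sg = 1 \<or> sg = -1"
  shows "(hs_sol_u b s sg has_derivative
            (\<lambda>v. hs_conn_u (s\<^sup>2) b z v (hs_sol_u b s sg z) (hs_sol_w b s sg z))) (at z)"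
    and "(hs_sol_w b s sg has_derivative
            (\<lambda>v. hs_conn_w (s\<^sup>2) b z v (hs_sol_u b s sg z) (hs_sol_w b s sg z))) (at z)"
proof -
  define C where "C = complex_of_real (cos (hs_beta b z / 2))"
  define S where "S = complex_of_real (sin (hs_beta b z / 2))"
  define E where "E = exp (\<i> * sg * hs_phase b s z)"
  have cs: "C\<^sup>2 + S\<^sup>2 = 1"
    unfolding C_def S_def by (metis of_real_1 of_real_add of_real_power sin_cos_squared_add2)
  have c: "complex_of_real (cos (hs_beta b z)) = C\<^sup>2 - S\<^sup>2"
    unfolding C_def S_def using cos_double[of "hs_beta b z / 2"] by simp
  have \<sigma>: "complex_of_real (sin (hs_beta b z)) = 2 * S * C"
    unfolding C_def S_def using sin_double[of "hs_beta b z / 2"] by simp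
  have u: "hs_sol_u b s sg z = (C * s - S * sg * \<i>) * E"
    and w: "hs_sol_w b s sg z = (S * s + C * sg * \<i>) * E"
    unfolding hs_sol_u_def hs_sol_w_def C_def S_def E_def by simp_all
  note eigen = conn_rotated_eigenvector[OF cs sg s c \<sigma> hs_phase_eq u w]
  have "(hs_sol_u b s sg has_derivative (\<lambda>v. - hs_sol_w b s sg z * (hs_beta b v / 2)
          + hs_sol_u b s sg z * (\<i> * sg * hs_phase b s v))) (at z)"
    unfolding hs_sol_u_def[abs_def] hs_sol_w_def
    by (auto intro!: derivative_eq_intros has_derivative_exp_complex has_derivative_hs_beta
          has_derivative_hs_phase
        simp: algebra_simps)
  then show "(hs_sol_u b s sg has_derivative
            (\<lambda>v. hs_conn_u (s\<^sup>2) b z v (hs_sol_u b s sg z) (hs_sol_w b s sg z))) (at z)"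
    by (rule has_derivative_eq_rhs) (simp add: fun_eq_iff hs_conn_u_def flip: eigen(1))
  have "(hs_sol_w b s sg has_derivative (\<lambda>v. hs_sol_u b s sg z * (hs_beta b v / 2)
          + hs_sol_w b s sg z * (\<i> * sg * hs_phase b s v))) (at z)"
    unfolding hs_sol_w_def[abs_def] hs_sol_u_def
    by (auto intro!: derivative_eq_intros has_derivative_exp_complex has_derivative_hs_beta
          has_derivative_hs_phase
        simp: algebra_simps)
  then show "(hs_sol_w b s sg has_derivative
            (\<lambda>v. hs_conn_w (s\<^sup>2) b z v (hs_sol_u b s sg z) (hs_sol_w b s sg z))) (at z)"
    by (rule has_derivative_eq_rhs) (simp add: fun_eq_iff hs_conn_w_def flip: eigen(2))
qed

lemma wronskian_hs_sol:
  "hs_sol_u b s 1 z * hs_sol_w b s (-1) z - hs_sol_w b s 1 z * hs_sol_u b s (-1) z = - 2 * \<i> * s"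
proof -
  define C where "C = complex_of_real (cos (hs_beta b z / 2))"
  define S where "S = complex_of_real (sin (hs_beta b z / 2))"
  have "C\<^sup>2 + S\<^sup>2 = 1"
    unfolding C_def S_def by (metis of_real_1 of_real_add of_real_power sin_cos_squared_add2)
  moreover have "exp (\<i> * 1 * hs_phase b s z) * exp (\<i> * (-1) * hs_phase b s z) = 1"
    by (simp add: exp_add[symmetric])
  ultimately show ?thesis
    unfolding hs_sol_u_def hs_sol_w_def C_def[symmetric] S_def[symmetric] by algebra
qed

lemma hs_sol_shift:
  assumes k: "ip b \<gamma> = of_int k"
  shows "hs_sol_u b s sg (z + \<gamma>) = cos (pi * k) * exp (\<i> * sg * hs_phase b s \<gamma>) * hs_sol_u b s sg z"
    and "hs_sol_w b s sg (z + \<gamma>) = cos (pi * k) * exp (\<i> * sg * hs_phase b s \<gamma>) * hs_sol_w b s sg z"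
proof -
  have half: "hs_beta b (z + \<gamma>) / 2 = hs_beta b z / 2 + pi * k"
    unfolding hs_beta_add by (simp add: hs_beta_def k field_simps)
  have "exp (\<i> * sg * hs_phase b s (z + \<gamma>)) = exp (\<i> * sg * hs_phase b s z) * exp (\<i> * sg * hs_phase b s \<gamma>)"
    by (simp add: hs_phase_add algebra_simps flip: exp_add)
  then show "hs_sol_u b s sg (z + \<gamma>) = cos (pi * k) * exp (\<i> * sg * hs_phase b s \<gamma>) * hs_sol_u b s sg z"
    and "hs_sol_w b s sg (z + \<gamma>) = cos (pi * k) * exp (\<i> * sg * hs_phase b s \<gamma>) * hs_sol_w b s sg z"
    unfolding hs_sol_u_def hs_sol_w_def half cos_add sin_add by (simp_all add: algebra_simps)
qed

section \<open>Parallel sections and monodromy\<close>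

context
  fixes b :: complex and g H :: "complex \<Rightarrow> quat" and dN :: "complex \<Rightarrow> complex \<Rightarrow> quat"
  assumes dN: "\<And>z. (hs_N b has_derivative dN z) (at z)"
    and H: "\<And>z v. dprime (hs_N b z) (dN z) v = - (hs_df b g z v \<odot> H z)"
begin

lemma parallel_section_iff_coords:
  shows "parallel_section b g H \<mu> \<alpha> \<longleftrightarrow> (\<forall>z. \<exists>D. (\<alpha> has_derivative D) (at z) \<and>
     (\<forall>v. D v = (hs_conn_u \<mu> b z v (fst (\<alpha> z)) (cnj (snd (\<alpha> z))),
                  cnj (hs_conn_w \<mu> b z v (fst (\<alpha> z)) (cnj (snd (\<alpha> z)))))))"
proof -
  have "(1/2) *\<^sub>R (hs_df b g z v \<odot> H z \<odot> (hs_N b z \<odot> \<alpha> z \<odot> qc (mu_a \<mu> - 1) + \<alpha> z \<odot> qc (mu_b \<mu>)))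
     = - (hs_conn_u \<mu> b z v (fst (\<alpha> z)) (cnj (snd (\<alpha> z))),
          cnj (hs_conn_w \<mu> b z v (fst (\<alpha> z)) (cnj (snd (\<alpha> z)))))" for z v
  proof -
    have "dN z = (\<lambda>v. (- \<i> * sin (hs_beta b z) * hs_beta b v, - \<i> * cos (hs_beta b z) * hs_beta b v))"
      using has_derivative_unique[OF dN has_derivative_hs_N] .
    then have "dprime (hs_N b z) (dN z) v = ((1/2) * (- \<i> * sin (hs_beta b z) * hs_beta b v),
        (1/2) * (- \<i> * cos (hs_beta b z) * hs_beta b v - hs_beta b (\<i> * v)))"
      using dprime_rotation[of "cos (hs_beta b z)" "sin (hs_beta b z)" "\<lambda>v. hs_beta b v" v]
      by (simp add: hs_N_eq)
    moreover have "hs_df b g z v \<odot> H z = - dprime (hs_N b z) (dN z) v"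
      using H[of z v] by simp
    ultimately have dfH: "hs_df b g z v \<odot> H z = - ((1/2) * (- \<i> * sin (hs_beta b z) * hs_beta b v),
        (1/2) * (- \<i> * cos (hs_beta b z) * hs_beta b v - hs_beta b (\<i> * v)))"
      by simp
    obtain x y where xy: "\<alpha> z = (x, y)" by (cases "\<alpha> z")
    show ?thesis
      unfolding dfH xy qmult_uminus_left scaleR_minus_right hs_N_eq fst_conv snd_conv
        hs_conn_u_def hs_conn_w_def
      by (subst connection_term_coords) (rule refl)
  qed
  then show ?thesis
    unfolding parallel_section_def by (simp only: diff_conv_add_uminus[symmetric] right_minus_eq)
qed

lemma hs_sol_parallel:
  assumes s: "s \<noteq> 0" and sg: "sg = 1 \<or> sg = -1"
  shows "parallel_section b g H (s\<^sup>2) (\<lambda>z. (hs_sol_u b s sg z, cnj (hs_sol_w b s sg z)))"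
  unfolding parallel_section_iff_coords
  using has_derivative_Pair[OF has_derivative_hs_sol(1)[OF s sg]
      has_derivative_cnj[OF has_derivative_hs_sol(2)[OF s sg]]]
  by auto

lemma wronskian_hs_sol_const:
  assumes s: "s \<noteq> 0" and sg: "sg = 1 \<or> sg = -1"
    and par: "parallel_section b g H (s\<^sup>2) \<alpha>"
  obtains K where "\<And>z. fst (\<alpha> z) * hs_sol_w b s sg z - cnj (snd (\<alpha> z)) * hs_sol_u b s sg z = K"
proof -
  have "\<exists>K. \<forall>z\<in>UNIV. fst (\<alpha> z) * hs_sol_w b s sg z - cnj (snd (\<alpha> z)) * hs_sol_u b s sg z = K"
  proof (rule has_derivative_zero_constant[OF convex_UNIV])
    fix x :: complex
    from par obtain D where D: "(\<alpha> has_derivative D) (at x)"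
      and Dv: "\<And>v. D v = (hs_conn_u (s\<^sup>2) b x v (fst (\<alpha> x)) (cnj (snd (\<alpha> x))),
                          cnj (hs_conn_w (s\<^sup>2) b x v (fst (\<alpha> x)) (cnj (snd (\<alpha> x)))))"
      unfolding parallel_section_iff_coords by blast
    note wronskian_derivative = has_derivative_diff
      [OF has_derivative_mult[OF has_derivative_fst[OF D] has_derivative_hs_sol(2)[OF s sg]]
          has_derivative_mult[OF has_derivative_cnj[OF has_derivative_snd[OF D]] has_derivative_hs_sol(1)[OF s sg]]]
    show "((\<lambda>z. fst (\<alpha> z) * hs_sol_w b s sg z - cnj (snd (\<alpha> z)) * hs_sol_u b s sg z)
            has_derivative (\<lambda>h. 0)) (at x within UNIV)"
      using conn_trace_free
      by (intro has_derivative_eq_rhs[OF wronskian_derivative])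
        (simp add: fun_eq_iff Dv hs_conn_u_def hs_conn_w_def algebra_simps)
  qed
  with that show ?thesis by blast
qed

lemma parallel_section_shift:
  assumes s: "s \<noteq> 0" and par: "parallel_section b g H (s\<^sup>2) \<alpha>"
    and shift: "\<And>sg z. sg = 1 \<or> sg = -1 \<Longrightarrow>
      hs_sol_u b s sg (z + \<gamma>) = c * hs_sol_u b s sg z \<and> hs_sol_w b s sg (z + \<gamma>) = c * hs_sol_w b s sg z"
    and c: "c * c = 1"
  shows "\<alpha> (z + \<gamma>) = \<alpha> z \<odot> qc c"
proof -
  txt \<open>\<open>(p, q)\<close> is \<open>\<alpha>(z + \<gamma>) - c \<alpha>(z)\<close> in coordinates. Since the Wronskian of \<open>\<alpha>\<close> with either
    basis section is constant and \<open>c\<^sup>2 = 1\<close>, it has zero Wronskian with both of them.\<close>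
  define p where "p = fst (\<alpha> (z + \<gamma>)) - c * fst (\<alpha> z)"
  define q where "q = cnj (snd (\<alpha> (z + \<gamma>))) - c * cnj (snd (\<alpha> z))"
  have pq: "p * hs_sol_w b s sg z - q * hs_sol_u b s sg z = 0" if sg: "sg = 1 \<or> sg = -1" for sg
  proof -
    obtain K where K: "\<And>z. fst (\<alpha> z) * hs_sol_w b s sg z - cnj (snd (\<alpha> z)) * hs_sol_u b s sg z = K"
      using wronskian_hs_sol_const[OF s sg par] by blast
    have "c * (fst (\<alpha> (z + \<gamma>)) * hs_sol_w b s sg z - cnj (snd (\<alpha> (z + \<gamma>))) * hs_sol_u b s sg z)
        = fst (\<alpha> (z + \<gamma>)) * hs_sol_w b s sg (z + \<gamma>) - cnj (snd (\<alpha> (z + \<gamma>))) * hs_sol_u b s sg (z + \<gamma>)"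
      using shift[OF sg, of z] by (simp add: algebra_simps)
    also have "\<dots> = fst (\<alpha> z) * hs_sol_w b s sg z - cnj (snd (\<alpha> z)) * hs_sol_u b s sg z"
      unfolding K ..
    finally have "(c * c) * (fst (\<alpha> (z + \<gamma>)) * hs_sol_w b s sg z - cnj (snd (\<alpha> (z + \<gamma>))) * hs_sol_u b s sg z)
        = c * (fst (\<alpha> z) * hs_sol_w b s sg z - cnj (snd (\<alpha> z)) * hs_sol_u b s sg z)"
      by (metis mult.assoc)
    then show ?thesis
      unfolding c p_def q_def by (simp add: algebra_simps)
  qed
  have "hs_sol_u b s 1 z * hs_sol_w b s (-1) z - hs_sol_w b s 1 z * hs_sol_u b s (-1) z \<noteq> 0"
    using s by (simp add: wronskian_hs_sol)
  from cramer_zero[OF pq pq this] have "p = 0" "q = 0" by simp_all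
  then have "fst (\<alpha> (z + \<gamma>)) = fst (\<alpha> z) * c" and "cnj (snd (\<alpha> (z + \<gamma>))) = c * cnj (snd (\<alpha> z))"
    unfolding p_def q_def by (simp_all add: mult.commute)
  moreover from this(2) have "snd (\<alpha> (z + \<gamma>)) = snd (\<alpha> z) * cnj c"
    by (metis complex_cnj_cnj complex_cnj_mult mult.commute)
  ultimately show ?thesis
    by (simp add: qmult_def qc_def prod_eq_iff)
qed

lemma monodromy_scalar_along_iff:
  assumes s: "s \<noteq> 0" and k: "ip b \<gamma> = of_int k"
  shows "(\<exists>c. \<forall>\<alpha>. parallel_section b g H (s\<^sup>2) \<alpha> \<longrightarrow> (\<forall>z. \<alpha> (z + \<gamma>) = \<alpha> z \<odot> qc c))
    \<longleftrightarrow> (\<exists>n::int. hs_phase b s \<gamma> = of_int n * pi)"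
proof
  assume "\<exists>c. \<forall>\<alpha>. parallel_section b g H (s\<^sup>2) \<alpha> \<longrightarrow> (\<forall>z. \<alpha> (z + \<gamma>) = \<alpha> z \<odot> qc c)"
  then obtain c where c: "\<And>\<alpha> z. parallel_section b g H (s\<^sup>2) \<alpha> \<Longrightarrow> \<alpha> (z + \<gamma>) = \<alpha> z \<odot> qc c"
    by blast
  have "cos (pi * k) * exp (\<i> * sg * hs_phase b s \<gamma>) = c" if sg: "sg = 1 \<or> sg = -1" for sg
  proof -
    have at0: "hs_sol_u b s sg 0 = s"
      by (simp add: hs_sol_u_def hs_phase_def hs_beta_def ip_def)
    have "cos (pi * k) * exp (\<i> * sg * hs_phase b s \<gamma>) * s = hs_sol_u b s sg (0 + \<gamma>)"
      using hs_sol_shift(1)[OF k, of s sg 0] unfolding at0 by (rule sym)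
    also have "\<dots> = hs_sol_u b s sg 0 * c"
      using c[OF hs_sol_parallel[OF s sg], of 0] by (simp add: qmult_def qc_def)
    finally show ?thesis
      using s by (simp add: at0)
  qed
  from this[of 1] this[of "-1"] have "exp (\<i> * hs_phase b s \<gamma>) = exp (- (\<i> * hs_phase b s \<gamma>))"
    by (cases "even k") auto
  then show "\<exists>n::int. hs_phase b s \<gamma> = of_int n * pi"
    by (simp add: exp_i_eq_exp_minus_i_iff)
next
  assume "\<exists>n::int. hs_phase b s \<gamma> = of_int n * pi"
  then obtain n :: int where n: "hs_phase b s \<gamma> = of_int n * pi" ..
  have shift: "hs_sol_u b s sg (z + \<gamma>) = cos (pi * k) * cos (pi * n) * hs_sol_u b s sg z \<and>
      hs_sol_w b s sg (z + \<gamma>) = cos (pi * k) * cos (pi * n) * hs_sol_w b s sg z"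
    if "sg = 1 \<or> sg = -1" for sg z
    using hs_sol_shift[OF k, of s sg z] exp_i_int_pi[OF that, of n] by (simp add: n)
  show "\<exists>c. \<forall>\<alpha>. parallel_section b g H (s\<^sup>2) \<alpha> \<longrightarrow> (\<forall>z. \<alpha> (z + \<gamma>) = \<alpha> z \<odot> qc c)"
  proof (intro exI allI impI)
    fix \<alpha> z
    assume "parallel_section b g H (s\<^sup>2) \<alpha>"
    then show "\<alpha> (z + \<gamma>) = \<alpha> z \<odot> qc (cos (pi * k) * cos (pi * n))"
      by (rule parallel_section_shift[OF s _ shift]) simp_all
  qed
qed

lemma monodromy_scalar_iff_hs_phase:
  assumes s: "s \<noteq> 0" and b: "b \<in> dual_lattice L"
  shows "monodromy_scalar L b g H (s\<^sup>2) \<longleftrightarrow> (\<forall>\<gamma>\<in>L. \<exists>n::int. hs_phase b s \<gamma> = of_int n * pi)"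
  unfolding monodromy_scalar_def
proof (intro ball_cong refl)
  fix \<gamma> assume "\<gamma> \<in> L"
  with b obtain k :: int where "ip b \<gamma> = of_int k"
    unfolding dual_lattice_def by (auto elim!: Ints_cases)
  from monodromy_scalar_along_iff[OF s this]
  show "(\<exists>c. \<forall>\<alpha>. parallel_section b g H (s\<^sup>2) \<alpha> \<longrightarrow> (\<forall>z. \<alpha> (z + \<gamma>) = \<alpha> z \<odot> qc c))
    \<longleftrightarrow> (\<exists>n::int. hs_phase b s \<gamma> = of_int n * pi)" .
qed

end

section \<open>The lattice condition\<close>

lemma hs_phase_unit:
  assumes "cmod s = 1"
  shows "hs_phase b s \<gamma> = pi * ip (b * cnj s) \<gamma>"
proof -
  define X where "X = b * cnj s * cnj \<gamma>"
  have "s \<noteq> 0" and "s * cnj s = 1"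
    using assms complex_norm_square[of s] by auto
  then have "b / s = b * cnj s"
    by (simp add: field_simps)
  then have "hs_phase b s \<gamma> = pi / 2 * (cnj X + X)"
    by (simp add: hs_phase_def X_def ac_simps)
  also have "\<dots> = pi * Re X"
    using complex_add_cnj[of X] by (simp add: add.commute)
  finally show ?thesis
    by (simp add: ip_def X_def)
qed

lemma Im_hs_phase:
  assumes "s \<noteq> 0"
  shows "Im (hs_phase b s \<gamma>) = pi / 2 * (1 / (cmod s)\<^sup>2 - 1) * Im (b * cnj s * cnj \<gamma>)"
proof -
  define X where "X = b * cnj s * cnj \<gamma>"
  define r where "r = (cmod s)\<^sup>2"
  have "b / s = b * cnj s / of_real r"
    using assms complex_norm_square[of s] by (simp add: r_def field_simps)
  then have "hs_phase b s \<gamma> = of_real (pi / 2) * (cnj X + X / of_real r)"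
    by (simp add: hs_phase_def X_def algebra_simps)
  then have "Im (hs_phase b s \<gamma>) = Im (of_real (pi / 2) * (cnj X + X / of_real r))"
    by (simp only:)
  also have "\<dots> = pi / 2 * (Im X / r - Im X)"
    by (simp add: Im_divide_of_real algebra_simps)
  finally show ?thesis
    unfolding X_def[symmetric] r_def[symmetric] by (simp add: algebra_simps)
qed

lemma norm_eq_1_if_hs_phase_real:
  assumes lattice: "Im (w1 * cnj w2) \<noteq> 0" and b: "b \<noteq> 0" and s: "s \<noteq> 0"
    and real: "Im (hs_phase b s w1) = 0" "Im (hs_phase b s w2) = 0"
  shows "cmod s = 1"
proof (rule ccontr)
  assume "cmod s \<noteq> 1"
  then have "1 / (cmod s)\<^sup>2 - 1 \<noteq> 0"
    using s by (simp add: abs_square_eq_1)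
  then have "Im (b * cnj s * cnj w) = 0" if "Im (hs_phase b s w) = 0" for w
    using that unfolding Im_hs_phase[OF s] by (metis divide_eq_0_iff mult_eq_0_iff pi_neq_zero zero_neq_numeral)
  with real have "Im (b * cnj s * cnj w1) = 0" and "Im (b * cnj s * cnj w2) = 0"
    by blast+
  moreover have "b * cnj s \<noteq> 0"
    using b s by simp
  ultimately have "Im (w1 * cnj w2) = 0"
    using Im_mult_cnj_eq_0_if_rotated_real by blast
  with lattice show False ..
qed

lemma hs_phase_int_on_lattice_iff:
  assumes lattice: "Im (w1 * cnj w2) \<noteq> 0" and b: "b \<noteq> 0" and s: "s \<noteq> 0"
  shows "(\<forall>\<gamma>\<in>lattice_gen w1 w2. \<exists>n::int. hs_phase b s \<gamma> = of_int n * pi)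
    \<longleftrightarrow> cmod s = 1 \<and> b * cnj s \<in> dual_lattice (lattice_gen w1 w2)"
proof
  assume phase_int: "\<forall>\<gamma>\<in>lattice_gen w1 w2. \<exists>n::int. hs_phase b s \<gamma> = of_int n * pi"
  have real: "Im (hs_phase b s \<gamma>) = 0" if "\<gamma> \<in> lattice_gen w1 w2" for \<gamma>
  proof -
    from phase_int that obtain n :: int where "hs_phase b s \<gamma> = of_int n * pi" by blast
    then show ?thesis by simp
  qed
  with real lattice_gen_generators norm_eq_1_if_hs_phase_real[OF lattice b s] have unit: "cmod s = 1"
    by blast
  have "ip (b * cnj s) \<gamma> \<in> \<int>" if "\<gamma> \<in> lattice_gen w1 w2" for \<gamma>
  proof -
    from phase_int that obtain n :: int where "hs_phase b s \<gamma> = of_int n * pi" by blast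
    then have "pi * ip (b * cnj s) \<gamma> = pi * of_int n"
      unfolding hs_phase_unit[OF unit] by (metis mult.commute of_real_eq_iff of_real_mult of_real_of_int_eq)
    then show ?thesis by simp
  qed
  with unit show "cmod s = 1 \<and> b * cnj s \<in> dual_lattice (lattice_gen w1 w2)"
    by (simp add: dual_lattice_def)
next
  assume unit_dual: "cmod s = 1 \<and> b * cnj s \<in> dual_lattice (lattice_gen w1 w2)"
  show "\<forall>\<gamma>\<in>lattice_gen w1 w2. \<exists>n::int. hs_phase b s \<gamma> = of_int n * pi"
  proof
    fix \<gamma> assume "\<gamma> \<in> lattice_gen w1 w2"
    with unit_dual obtain n :: int where "ip (b * cnj s) \<gamma> = of_int n"
      unfolding dual_lattice_def by (auto elim!: Ints_cases)
    with unit_dual have "hs_phase b s \<gamma> = of_int n * pi"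
      by (simp add: hs_phase_unit mult.commute)
    then show "\<exists>n::int. hs_phase b s \<gamma> = of_int n * pi" ..
  qed
qed

theorem corollary5p4:
  fixes w1 w2 \<beta>0 \<mu> :: complex
    and f g H :: "complex \<Rightarrow> quat"
    and dN :: "complex \<Rightarrow> complex \<Rightarrow> quat"
  assumes lattice: "Im (w1 * cnj w2) \<noteq> 0"
    and beta0: "\<beta>0 \<in> dual_lattice (lattice_gen w1 w2)" "\<beta>0 \<noteq> 0"
    and smooth: "smooth_fun f"
    and periodic: "\<And>z \<gamma>. \<gamma> \<in> lattice_gen w1 w2 \<Longrightarrow> f (z + \<gamma>) = f z"
    and g_nz: "\<And>z. g z \<noteq> 0"
    and df: "\<And>z. (f has_derivative hs_df \<beta>0 g z) (at z)"
    and dN: "\<And>z. (hs_N \<beta>0 has_derivative dN z) (at z)"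
    and H: "\<And>z v. dprime (hs_N \<beta>0 z) (dN z) v = - (hs_df \<beta>0 g z v \<odot> H z)"
    and mu: "\<mu> \<noteq> 0"
  shows "monodromy_scalar (lattice_gen w1 w2) \<beta>0 g H \<mu> \<longleftrightarrow>
         (cmod \<mu> = 1 \<and> (\<exists>s. s\<^sup>2 = \<mu> \<and> \<beta>0 * cnj s \<in> dual_lattice (lattice_gen w1 w2)))"
proof -
  let ?L = "lattice_gen w1 w2"
  have root: "monodromy_scalar ?L \<beta>0 g H \<mu> \<longleftrightarrow> cmod s = 1 \<and> \<beta>0 * cnj s \<in> dual_lattice ?L"
    if "s\<^sup>2 = \<mu>" for s
  proof -
    from that mu have "s \<noteq> 0" by auto
    with that show ?thesis
      using monodromy_scalar_iff_hs_phase[OF dN H _ beta0(1)] hs_phase_int_on_lattice_iff[OF lattice beta0(2)]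
      by blast
  qed
  have "cmod s = 1 \<longleftrightarrow> cmod \<mu> = 1" if "s\<^sup>2 = \<mu>" for s
    using that by (auto simp: norm_power abs_square_eq_1)
  with root[of "csqrt \<mu>"] root show ?thesis
    by (metis power2_csqrt)
qed

end
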